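(* Suppose $\mathbb{E}Y^2<\infty$, the central mean subspace of $Y$ given $X$ exists, has dimension $d^*_{\rm CMS}$, and $B\in\mathbb{R}^{p\times d^*_{\rm CMS}}$ is a basis matrix of it. Then under squared loss with oracle representation $R^*=B^\top X$, $d^*(\mathcal{L})=d^*_{\rm CMS}$.
   Context: $X\in\mathbb{R}^p$, $Y\in\mathbb{R}$. A subspace $\mathcal{S}\subseteq\mathbb{R}^p$ is a mean dimension-reduction subspace if $\mathbb{E}(Y\mid X)=\mathbb{E}(Y\mid P_{\mathcal{S}}X)$ a.s.; the central mean subspace is the intersection of all such subspaces, assumed itself to be one, and $d^*_{\rm CMS}$ is its dimension (the minimal dimension of a mean dimension-reduction subspace). The oracle $R^*=B^\top X$ is zero-padded to $R\in\mathbb{R}^{d_{\max}}$, $d_{\max}\ge d^*_{\rm CMS}$. $\mathcal{G}$ = all measurable $g:\mathbb{R}^{d_{\max}}\to\mathbb{R}$ with $\mathbb{E}g(R)^2<\infty$; $\mathcal{G}_d=\{g\in\mathcal{G}:g(r)=g(r')\text{ whenever } r_{[d]}=r'_{[d]}\}$; $\mathcal{L}_d=\min_{g\in\mathcal{G}_d}\mathbb{E}(Y-g(R))^2$; $d^*(\mathcal{L})=\min\{0\le d\le d_{\max}:\mathcal{L}_d=\mathcal{L}_{d_{\max}}\}$. *)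

theory Defs
  imports "HOL-Probability.Probability"
begin

definition orth_proj :: "'b::euclidean_space set \<Rightarrow> 'b \<Rightarrow> 'b" where
  "orth_proj S x = (THE y. y \<in> S \<and> (\<forall>z\<in>S. (x - y) \<bullet> z = 0))"

definition mean_dr_subspace ::
  "'a measure \<Rightarrow> ('a \<Rightarrow> 'b::euclidean_space) \<Rightarrow> ('a \<Rightarrow> real) \<Rightarrow> 'b set \<Rightarrow> bool" where
  "mean_dr_subspace M X Y S \<longleftrightarrow> subspace S \<and>
     (AE \<omega> in M. real_cond_exp M (vimage_algebra (space M) X borel) Y \<omega> =
                 real_cond_exp M (vimage_algebra (space M) (\<lambda>\<omega>. orth_proj S (X \<omega>)) borel) Y \<omega>)"

definition central_mean_subspace ::
  "'a measure \<Rightarrow> ('a \<Rightarrow> 'b::euclidean_space) \<Rightarrow> ('a \<Rightarrow> real) \<Rightarrow> 'b set" where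
  "central_mean_subspace M X Y = \<Inter> {S. mean_dr_subspace M X Y S}"

text \<open>R^{d_max} is modelled as extensional functions on {..<dmax} with the product Borel sigma algebra.\<close>
abbreviation Rspace :: "nat \<Rightarrow> (nat \<Rightarrow> real) measure" where
  "Rspace dmax \<equiv> PiM {..<dmax} (\<lambda>_. borel)"

definition G_class ::
  "'a measure \<Rightarrow> ('a \<Rightarrow> nat \<Rightarrow> real) \<Rightarrow> nat \<Rightarrow> nat \<Rightarrow> ((nat \<Rightarrow> real) \<Rightarrow> real) set" where
  "G_class M R dmax d = {g. g \<in> borel_measurable (Rspace dmax) \<and>
      integrable M (\<lambda>\<omega>. (g (R \<omega>))\<^sup>2) \<and>
      (\<forall>r\<in>space (Rspace dmax). \<forall>r'\<in>space (Rspace dmax).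
          (\<forall>i<d. r i = r' i) \<longrightarrow> g r = g r')}"

text \<open>L_d = min over G_d of E(Y - g(R))^2 (the minimum is attained; written as Inf).\<close>
definition sq_loss ::
  "'a measure \<Rightarrow> ('a \<Rightarrow> real) \<Rightarrow> ('a \<Rightarrow> nat \<Rightarrow> real) \<Rightarrow> nat \<Rightarrow> nat \<Rightarrow> real" where
  "sq_loss M Y R dmax d = Inf ((\<lambda>g. \<integral>\<omega>. (Y \<omega> - g (R \<omega>))\<^sup>2 \<partial>M) ` G_class M R dmax d)"

definition d_star_L ::
  "'a measure \<Rightarrow> ('a \<Rightarrow> real) \<Rightarrow> ('a \<Rightarrow> nat \<Rightarrow> real) \<Rightarrow> nat \<Rightarrow> nat" where
  "d_star_L M Y R dmax = (LEAST d. d \<le> dmax \<and> sq_loss M Y R dmax d = sq_loss M Y R dmax dmax)"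

text \<open>Zero-padded oracle representation R = (B^T X, 0) in R^{dmax}; column i of B is b i.\<close>
definition oracle_rep ::
  "('a \<Rightarrow> 'b::euclidean_space) \<Rightarrow> (nat \<Rightarrow> 'b) \<Rightarrow> nat \<Rightarrow> nat \<Rightarrow> 'a \<Rightarrow> nat \<Rightarrow> real" where
  "oracle_rep X b d dmax \<omega> = (\<lambda>i\<in>{..<dmax}. if i < d then b i \<bullet> X \<omega> else 0)"

end

theory Submission
  imports Defs
begin

(*
  Write R for the zero-padded oracle representation and P_k for the orthogonal projection
  onto the span of the first k columns of B. For k <= d, a function of the first k
  coordinates of R is the same thing as a function of P_k X, so by the Pythagorean identity
  for conditional expectations L_k is the risk of E(Y | P_k X); the padding coordinates
  vanish, so L_d = L_dmax. If L_k = L_d for some k < d, the nested conditional expectations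
  E(Y | P_k X) and E(Y | P_d X) have equal risk and hence agree almost surely. Then the span
  of the first k columns is a mean dimension-reduction subspace, so it contains the central
  mean subspace, whose dimension d exceeds k: a contradiction.
*)

lemma orth_proj_unique:
  fixes S :: "'b::euclidean_space set"
  assumes "subspace S" "y \<in> S" "\<And>z. z \<in> S \<Longrightarrow> (x - y) \<bullet> z = 0"
  shows "orth_proj S x = y"
  unfolding orth_proj_def
proof (rule the_equality)
  fix y' assume y': "y' \<in> S \<and> (\<forall>z\<in>S. (x - y') \<bullet> z = 0)"
  then have "y - y' \<in> S" using assms by (simp add: subspace_diff)
  then have "(x - y') \<bullet> (y - y') = 0" "(x - y) \<bullet> (y - y') = 0" using assms y' by auto
  then have "(y - y') \<bullet> (y - y') = 0" by (simp add: inner_diff_left)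
  then show "y' = y" by simp
qed (use assms in auto)

lemma
  fixes S :: "'b::euclidean_space set"
  assumes "subspace S"
  shows orth_proj_in_subspace: "orth_proj S x \<in> S"
    and orth_proj_orthogonal: "z \<in> S \<Longrightarrow> (x - orth_proj S x) \<bullet> z = 0"
proof -
  obtain y w where "y \<in> span S" "\<And>z. z \<in> span S \<Longrightarrow> orthogonal w z" "x = y + w"
    using orthogonal_subspace_decomp_exists[of S x] by metis
  moreover have "span S = S"
    using assms by simp
  ultimately have "y \<in> S" "\<And>z. z \<in> S \<Longrightarrow> (x - y) \<bullet> z = 0" "orth_proj S x = y"
    using assms by (auto simp: orthogonal_def intro: orth_proj_unique)
  then show "orth_proj S x \<in> S" "z \<in> S \<Longrightarrow> (x - orth_proj S x) \<bullet> z = 0"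
    by auto
qed

lemma inner_orth_proj:
  fixes S :: "'b::euclidean_space set"
  assumes "subspace S" "z \<in> S"
  shows "z \<bullet> orth_proj S x = z \<bullet> x"
proof -
  have "(x - orth_proj S x) \<bullet> z = 0" by (rule orth_proj_orthogonal[OF assms])
  then show ?thesis by (simp add: inner_diff_left inner_commute[of z])
qed

lemma orth_proj_orth_proj_subspace:
  fixes S T :: "'b::euclidean_space set"
  assumes "subspace S" "subspace T" "T \<subseteq> S"
  shows "orth_proj T (orth_proj S x) = orth_proj T x"
proof (rule sym, rule orth_proj_unique[OF assms(2) orth_proj_in_subspace[OF assms(2)]])
  fix z assume "z \<in> T"
  then have "(x - orth_proj S x) \<bullet> z = 0" "(orth_proj S x - orth_proj T (orth_proj S x)) \<bullet> z = 0"
    using assms by (auto intro: orth_proj_orthogonal)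
  then show "(x - orth_proj T (orth_proj S x)) \<bullet> z = 0"
    by (simp add: inner_diff_left)
qed

lemma orth_proj_span_orthogonal_eq_sum:
  fixes T :: "'b::euclidean_space set"
  assumes "pairwise orthogonal T"
  shows "orth_proj (span T) x = (\<Sum>t\<in>T. (t \<bullet> x / (t \<bullet> t)) *\<^sub>R t)"
proof (rule orth_proj_unique[OF subspace_span])
  show "(\<Sum>t\<in>T. (t \<bullet> x / (t \<bullet> t)) *\<^sub>R t) \<in> span T"
    by (intro span_sum span_mul span_base)
  show "(x - (\<Sum>t\<in>T. (t \<bullet> x / (t \<bullet> t)) *\<^sub>R t)) \<bullet> z = 0" if "z \<in> span T" for z
    using Gram_Schmidt_step[OF assms that, of x] by (simp add: orthogonal_def inner_commute)
qed

lemma borel_measurable_orth_proj: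
  fixes S :: "'b::euclidean_space set"
  assumes "subspace S"
  shows "orth_proj S \<in> borel_measurable borel"
proof -
  obtain T where "0 \<notin> T" "pairwise orthogonal T" "span T = S"
    using orthogonal_basis_subspace[OF assms] by metis
  then have "orth_proj S = (\<lambda>x. \<Sum>t\<in>T. (t \<bullet> x / (t \<bullet> t)) *\<^sub>R t)"
    using orth_proj_span_orthogonal_eq_sum by blast
  also have "\<dots> \<in> borel_measurable borel"
    using \<open>0 \<notin> T\<close> by (intro borel_measurable_continuous_onI continuous_intros) auto
  finally show ?thesis .
qed

lemma span_image_finite:
  assumes "finite I"
  shows "span (b ` I) = range (\<lambda>c. \<Sum>i\<in>I. c i *\<^sub>R b i)"
proof
  show "span (b ` I) \<subseteq> range (\<lambda>c. \<Sum>i\<in>I. c i *\<^sub>R b i)"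
  proof
    fix y assume "y \<in> span (b ` I)"
    then show "y \<in> range (\<lambda>c. \<Sum>i\<in>I. c i *\<^sub>R b i)"
    proof (induction rule: span_induct_alt)
      case base
      show ?case by (rule range_eqI[where x = "\<lambda>_. 0"]) simp
    next
      case (step a v y)
      then obtain j c where "j \<in> I" "v = b j" "y = (\<Sum>i\<in>I. c i *\<^sub>R b i)" by blast
      then have "a *\<^sub>R v + y = (\<Sum>i\<in>I. (c i + (if i = j then a else 0)) *\<^sub>R b i)"
        using assms
        by (simp add: scaleR_add_left sum.distrib if_distrib[of "\<lambda>r. r *\<^sub>R _"] cong: if_cong)
      then show ?case by (rule range_eqI[where x = "\<lambda>i. c i + (if i = j then a else 0)"])
    qed
  qed
  show "range (\<lambda>c. \<Sum>i\<in>I. c i *\<^sub>R b i) \<subseteq> span (b ` I)"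
    by (auto intro!: span_sum span_mul intro: span_base)
qed

lemma dim_le_if_subset_span_image_lessThan:
  assumes "S \<subseteq> span (b ` {..<k})"
  shows "dim S \<le> k"
  using dim_le_card[OF assms] card_image_le[of "{..<k}" b] by simp

lemma orth_proj_span_image_eq_sum:
  fixes b :: "'i \<Rightarrow> 'b::euclidean_space"
  assumes "finite I"
  obtains w where "\<And>x. orth_proj (span (b ` I)) x = (\<Sum>i\<in>I. (b i \<bullet> x) *\<^sub>R w i)"
proof -
  obtain T where T: "T \<subseteq> span (b ` I)" "pairwise orthogonal T" "span T = span (b ` I)"
    using orthogonal_basis_subspace[OF subspace_span] by metis
  then have "\<forall>t\<in>T. \<exists>c. t = (\<Sum>i\<in>I. c i *\<^sub>R b i)"
    using span_image_finite[OF assms] by blast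
  then obtain c where c: "\<And>t. t \<in> T \<Longrightarrow> t = (\<Sum>i\<in>I. c t i *\<^sub>R b i)" by metis
  have "orth_proj (span (b ` I)) x = (\<Sum>i\<in>I. (b i \<bullet> x) *\<^sub>R (\<Sum>t\<in>T. (c t i / (t \<bullet> t)) *\<^sub>R t))" for x
  proof -
    have coeff: "t \<bullet> x = (\<Sum>i\<in>I. c t i * (b i \<bullet> x))" if "t \<in> T" for t
      by (subst c[OF that]) (simp add: inner_sum_left)
    have "orth_proj (span (b ` I)) x = (\<Sum>t\<in>T. (t \<bullet> x / (t \<bullet> t)) *\<^sub>R t)"
      using orth_proj_span_orthogonal_eq_sum[OF T(2)] T(3) by simp
    also have "\<dots> = (\<Sum>t\<in>T. ((\<Sum>i\<in>I. c t i * (b i \<bullet> x)) / (t \<bullet> t)) *\<^sub>R t)"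
      by (intro sum.cong refl) (simp add: coeff)
    also have "\<dots> = (\<Sum>i\<in>I. (b i \<bullet> x) *\<^sub>R (\<Sum>t\<in>T. (c t i / (t \<bullet> t)) *\<^sub>R t))"
      by (simp add: scaleR_sum_right sum_divide_distrib scaleR_sum_left sum.swap[of _ T] mult.commute)
    finally show ?thesis .
  qed
  then show ?thesis by (rule that)
qed

lemma vimage_algebra_measurable_factor_ennreal:
  fixes u :: "'a \<Rightarrow> ennreal"
  assumes f: "f \<in> \<Omega> \<rightarrow> space N" and u: "u \<in> borel_measurable (vimage_algebra \<Omega> f N)"
  shows "\<exists>g\<in>borel_measurable N. \<forall>\<omega>\<in>\<Omega>. u \<omega> = g (f \<omega>)"
  using u
proof (induction rule: borel_measurable_induct)
  case (cong u v)
  then obtain g where "g \<in> borel_measurable N" "\<forall>\<omega>\<in>\<Omega>. v \<omega> = g (f \<omega>)" by blast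
  moreover have "\<forall>\<omega>\<in>\<Omega>. u \<omega> = v \<omega>" using cong(3) by simp
  ultimately show ?case by auto
next
  case (set A)
  then obtain B where "B \<in> sets N" "A = f -` B \<inter> \<Omega>"
    using sets_vimage_algebra2[OF f] by auto
  then show ?case
    by (intro bexI[where x = "indicator B"]) (auto simp: indicator_def)
next
  case (mult u c)
  then obtain g where "g \<in> borel_measurable N" "\<forall>\<omega>\<in>\<Omega>. u \<omega> = g (f \<omega>)" by blast
  then show ?case by (intro bexI[where x = "\<lambda>y. c * g y"]) simp_all
next
  case (add u v)
  then obtain g h where "g \<in> borel_measurable N" "\<forall>\<omega>\<in>\<Omega>. u \<omega> = g (f \<omega>)"
    and "h \<in> borel_measurable N" "\<forall>\<omega>\<in>\<Omega>. v \<omega> = h (f \<omega>)" by blast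
  then show ?case by (intro bexI[where x = "\<lambda>y. h y + g y"]) simp_all
next
  case (seq U)
  then obtain G where "\<And>i. G i \<in> borel_measurable N" "\<And>i. \<forall>\<omega>\<in>\<Omega>. U i \<omega> = G i (f \<omega>)"
    by metis
  moreover have "(SUP i. U i) \<omega> = (SUP i. U i \<omega>)" for \<omega>
    by (rule SUP_apply)
  ultimately show ?case by (intro bexI[where x = "\<lambda>y. SUP i. G i y"]) simp_all
qed

lemma vimage_algebra_measurable_factor:
  fixes u :: "'a \<Rightarrow> real"
  assumes f: "f \<in> \<Omega> \<rightarrow> space N" and u: "u \<in> borel_measurable (vimage_algebra \<Omega> f N)"
  shows "\<exists>g\<in>borel_measurable N. \<forall>\<omega>\<in>\<Omega>. u \<omega> = g (f \<omega>)"
proof -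
  have "(\<lambda>\<omega>. ennreal (u \<omega>)) \<in> borel_measurable (vimage_algebra \<Omega> f N)"
       "(\<lambda>\<omega>. ennreal (- u \<omega>)) \<in> borel_measurable (vimage_algebra \<Omega> f N)"
    using u by measurable
  then obtain g h where "g \<in> borel_measurable N" "\<forall>\<omega>\<in>\<Omega>. ennreal (u \<omega>) = g (f \<omega>)"
    and "h \<in> borel_measurable N" "\<forall>\<omega>\<in>\<Omega>. ennreal (- u \<omega>) = h (f \<omega>)"
    using vimage_algebra_measurable_factor_ennreal[OF f] by metis
  moreover have "x = enn2real (ennreal x) - enn2real (ennreal (- x))" for x :: real
    by (cases "x \<ge> 0") (auto simp: ennreal_neg)
  ultimately have "\<forall>\<omega>\<in>\<Omega>. u \<omega> = enn2real (g (f \<omega>)) - enn2real (h (f \<omega>))"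
    by metis
  with \<open>g \<in> borel_measurable N\<close> \<open>h \<in> borel_measurable N\<close> show ?thesis
    by (intro bexI[where x = "\<lambda>y. enn2real (g y) - enn2real (h y)"]) auto
qed

lemma subalgebra_vimage_algebra_comp:
  assumes "f \<in> \<Omega> \<rightarrow> space N" "g \<in> N \<rightarrow>\<^sub>M N'"
  shows "subalgebra (vimage_algebra \<Omega> f N) (vimage_algebra \<Omega> (\<lambda>\<omega>. g (f \<omega>)) N')"
  unfolding subalgebra_def
  using sets_image_in_sets[OF _ measurable_compose[OF measurable_vimage_algebra1 assms(2)]] assms(1)
  by simp

lemma (in prob_space) sigma_finite_subalgebra_vimage_algebra:
  assumes "f \<in> M \<rightarrow>\<^sub>M N"
  shows "sigma_finite_subalgebra M (vimage_algebra (space M) f N)"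
proof (rule finite_measure_subalgebra_is_sigma_finite)
  show "finite_measure_subalgebra M (vimage_algebra (space M) f N)"
    unfolding finite_measure_subalgebra_def finite_measure_subalgebra_axioms_def subalgebra_def
    using sets_image_in_sets[OF refl assms] finite_measure_axioms by auto
qed

lemma integrable_mult_of_square_integrable:
  fixes f g :: "'a \<Rightarrow> real"
  assumes "f \<in> borel_measurable M" "g \<in> borel_measurable M"
    and "integrable M (\<lambda>x. (f x)\<^sup>2)" "integrable M (\<lambda>x. (g x)\<^sup>2)"
  shows "integrable M (\<lambda>x. f x * g x)"
proof (rule Bochner_Integration.integrable_bound)
  show "integrable M (\<lambda>x. (f x)\<^sup>2 + (g x)\<^sup>2)" using assms by auto
  show "(\<lambda>x. f x * g x) \<in> borel_measurable M" using assms by measurable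
  have "\<bar>a * b\<bar> \<le> a\<^sup>2 + b\<^sup>2" for a b :: real
  proof -
    have "\<bar>a * b\<bar> \<le> 2 * \<bar>a\<bar> * \<bar>b\<bar>" by (simp add: abs_mult)
    also have "\<dots> \<le> a\<^sup>2 + b\<^sup>2" using sum_squares_bound[of "\<bar>a\<bar>" "\<bar>b\<bar>"] by simp
    finally show ?thesis .
  qed
  then show "AE x in M. norm (f x * g x) \<le> norm ((f x)\<^sup>2 + (g x)\<^sup>2)" by simp
qed

lemma integrable_square_diff:
  fixes f g :: "'a \<Rightarrow> real"
  assumes "f \<in> borel_measurable M" "g \<in> borel_measurable M"
    and "integrable M (\<lambda>x. (f x)\<^sup>2)" "integrable M (\<lambda>x. (g x)\<^sup>2)"
  shows "integrable M (\<lambda>x. (f x - g x)\<^sup>2)"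
proof -
  have "integrable M (\<lambda>x. (f x)\<^sup>2 + (g x)\<^sup>2 - 2 * (f x * g x))"
    using integrable_mult_of_square_integrable[OF assms] assms by auto
  then show ?thesis by (simp add: power2_diff mult.assoc)
qed

context sigma_finite_subalgebra
begin

lemma integrable_real_cond_exp_square:
  assumes "integrable M Y" "integrable M (\<lambda>x. (Y x)\<^sup>2)"
  shows "integrable M (\<lambda>x. (real_cond_exp M F Y x)\<^sup>2)"
  using convex_power2 assms
  by (intro integrable_convex_cond_exp[where I = UNIV and q = "\<lambda>x. x\<^sup>2"]) auto

lemma real_cond_exp_pythagoras:
  assumes Y: "Y \<in> borel_measurable M" "integrable M Y" "integrable M (\<lambda>x. (Y x)\<^sup>2)"
    and Z: "Z \<in> borel_measurable F" "integrable M (\<lambda>x. (Z x)\<^sup>2)"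
  shows "(\<integral>x. (Y x - Z x)\<^sup>2 \<partial>M) = (\<integral>x. (Y x - real_cond_exp M F Y x)\<^sup>2 \<partial>M)
           + (\<integral>x. (real_cond_exp M F Y x - Z x)\<^sup>2 \<partial>M)"
proof -
  define c where "c = real_cond_exp M F Y"
  have c2: "integrable M (\<lambda>x. (c x)\<^sup>2)"
    unfolding c_def using Y(2,3) by (rule integrable_real_cond_exp_square)
  have cM: "c \<in> borel_measurable M" unfolding c_def by simp
  have ZM: "Z \<in> borel_measurable M" using measurable_from_subalg[OF subalg Z(1)] .
  have cZ: "(\<lambda>x. c x - Z x) \<in> borel_measurable M" "(\<lambda>x. c x - Z x) \<in> borel_measurable F"
    using cM ZM Z(1) unfolding c_def by measurable
  have int: "integrable M (\<lambda>x. (Y x - c x)\<^sup>2)" "integrable M (\<lambda>x. (c x - Z x)\<^sup>2)"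
    using integrable_square_diff[OF Y(1) cM Y(3) c2] integrable_square_diff[OF cM ZM c2 Z(2)] .
  have int': "integrable M (\<lambda>x. (c x - Z x) * Y x)" "integrable M (\<lambda>x. (c x - Z x) * c x)"
    using integrable_mult_of_square_integrable[OF cZ(1) Y(1) int(2) Y(3)]
      integrable_mult_of_square_integrable[OF cZ(1) cM int(2) c2] .
  txt \<open>The cross term vanishes because \<open>c - Z\<close> is \<open>F\<close>-measurable.\<close>
  have cross: "(\<integral>x. (c x - Z x) * c x \<partial>M) = (\<integral>x. (c x - Z x) * Y x \<partial>M)"
    using int'(1) cZ(2) Y(1) unfolding c_def by (rule real_cond_exp_intg(2))
  have "(\<lambda>x. (Y x - Z x)\<^sup>2)
      = (\<lambda>x. (Y x - c x)\<^sup>2 + (c x - Z x)\<^sup>2 + 2 * ((c x - Z x) * Y x - (c x - Z x) * c x))"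
    by (auto simp: power2_eq_square algebra_simps)
  then have "(\<integral>x. (Y x - Z x)\<^sup>2 \<partial>M) = (\<integral>x. (Y x - c x)\<^sup>2 \<partial>M) + (\<integral>x. (c x - Z x)\<^sup>2 \<partial>M)
      + 2 * ((\<integral>x. (c x - Z x) * Y x \<partial>M) - (\<integral>x. (c x - Z x) * c x \<partial>M))"
    using int int' by simp
  then show ?thesis using cross by (simp add: c_def)
qed

lemma real_cond_exp_AE_eq_of_risk_eq:
  assumes G: "sigma_finite_subalgebra M G" "subalgebra F G"
    and Y: "Y \<in> borel_measurable M" "integrable M Y" "integrable M (\<lambda>x. (Y x)\<^sup>2)"
    and eq: "(\<integral>x. (Y x - real_cond_exp M G Y x)\<^sup>2 \<partial>M) = (\<integral>x. (Y x - real_cond_exp M F Y x)\<^sup>2 \<partial>M)"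
  shows "AE x in M. real_cond_exp M G Y x = real_cond_exp M F Y x"
proof -
  let ?f = "real_cond_exp M F Y" and ?g = "real_cond_exp M G Y"
  have gF: "?g \<in> borel_measurable F"
    using measurable_from_subalg[OF G(2) borel_measurable_cond_exp] .
  have g2: "integrable M (\<lambda>x. (?g x)\<^sup>2)" "integrable M (\<lambda>x. (?f x)\<^sup>2)"
    using sigma_finite_subalgebra.integrable_real_cond_exp_square[OF G(1) Y(2,3)]
      integrable_real_cond_exp_square[OF Y(2,3)] .
  have "(\<integral>x. (?f x - ?g x)\<^sup>2 \<partial>M) = 0"
    using real_cond_exp_pythagoras[OF Y gF g2(1)] eq by simp
  then have "AE x in M. (?f x - ?g x)\<^sup>2 = 0"
    using integral_nonneg_eq_0_iff_AE[OF integrable_square_diff[OF _ _ g2(2) g2(1)]] by simp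
  then show ?thesis by eventually_elim simp
qed

end

lemma G_class_mono:
  assumes "k \<le> k'"
  shows "G_class M R dmax k \<subseteq> G_class M R dmax k'"
  unfolding G_class_def using less_le_trans[OF _ assms] by blast

lemma sq_loss_eq_cond_exp_risk:
  assumes F: "sigma_finite_subalgebra M F"
    and Y: "Y \<in> borel_measurable M" "integrable M Y" "integrable M (\<lambda>\<omega>. (Y \<omega>)\<^sup>2)"
    and opt: "g\<^sub>0 \<in> G_class M R dmax k" "\<And>\<omega>. \<omega> \<in> space M \<Longrightarrow> g\<^sub>0 (R \<omega>) = real_cond_exp M F Y \<omega>"
    and meas: "\<And>g. g \<in> G_class M R dmax k \<Longrightarrow> (\<lambda>\<omega>. g (R \<omega>)) \<in> borel_measurable F"
  shows "sq_loss M Y R dmax k = (\<integral>\<omega>. (Y \<omega> - real_cond_exp M F Y \<omega>)\<^sup>2 \<partial>M)"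
proof -
  let ?risk = "\<lambda>g. \<integral>\<omega>. (Y \<omega> - g (R \<omega>))\<^sup>2 \<partial>M"
  let ?min = "\<integral>\<omega>. (Y \<omega> - real_cond_exp M F Y \<omega>)\<^sup>2 \<partial>M"
  have "?risk g\<^sub>0 = ?min"
    using opt(2) by (intro Bochner_Integration.integral_cong) simp_all
  with imageI[OF opt(1), of ?risk] have attained: "?min \<in> ?risk ` G_class M R dmax k"
    by simp
  have lower_bound: "?min \<le> ?risk g" if g: "g \<in> G_class M R dmax k" for g
  proof -
    have "integrable M (\<lambda>\<omega>. (g (R \<omega>))\<^sup>2)" using g by (simp add: G_class_def)
    then have "?risk g = ?min + (\<integral>\<omega>. (real_cond_exp M F Y \<omega> - g (R \<omega>))\<^sup>2 \<partial>M)"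
      by (rule sigma_finite_subalgebra.real_cond_exp_pythagoras[OF F Y meas[OF g]])
    then show ?thesis by simp
  qed
  show ?thesis
    unfolding sq_loss_def using attained by (rule cInf_eq_minimum) (auto intro: lower_bound)
qed

lemma sq_loss_eq_if_trailing_coordinates_vanish:
  assumes "d \<le> dmax" and R_space: "\<And>\<omega>. R \<omega> \<in> space (Rspace dmax)"
    and R_vanish: "\<And>\<omega> i. d \<le> i \<Longrightarrow> i < dmax \<Longrightarrow> R \<omega> i = 0"
  shows "sq_loss M Y R dmax d = sq_loss M Y R dmax dmax"
proof -
  let ?risk = "\<lambda>g. \<integral>\<omega>. (Y \<omega> - g (R \<omega>))\<^sup>2 \<partial>M"
  define \<pi> where "\<pi> r = (\<lambda>i\<in>{..<dmax}. if i < d then r i else (0::real))" for r :: "nat \<Rightarrow> real"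
  have \<pi>_measurable: "\<pi> \<in> Rspace dmax \<rightarrow>\<^sub>M Rspace dmax"
    unfolding \<pi>_def by (intro measurable_restrict) (auto intro: measurable_component_singleton)
  have \<pi>_R: "\<pi> (R \<omega>) = R \<omega>" for \<omega>
  proof
    fix i show "\<pi> (R \<omega>) i = R \<omega> i"
      using R_vanish[of i] PiE_arb[OF R_space[of \<omega>, unfolded space_PiM], of i]
      by (cases "i < dmax") (auto simp: \<pi>_def)
  qed
  have \<pi>_eq: "\<pi> r = \<pi> r'" if "\<forall>i<d. r i = r' i" for r r'
    using that by (auto simp: \<pi>_def)
  have "?risk g \<in> ?risk ` G_class M R dmax d" if g: "g \<in> G_class M R dmax dmax" for g
  proof -
    have "(\<lambda>r. g (\<pi> r)) \<in> G_class M R dmax d"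
      unfolding G_class_def mem_Collect_eq
    proof (intro conjI ballI impI)
      show "(\<lambda>r. g (\<pi> r)) \<in> borel_measurable (Rspace dmax)"
        using g by (intro measurable_compose[OF \<pi>_measurable]) (simp add: G_class_def)
      show "integrable M (\<lambda>\<omega>. (g (\<pi> (R \<omega>)))\<^sup>2)"
        using g by (simp add: G_class_def \<pi>_R)
      fix r r' :: "nat \<Rightarrow> real" assume "\<forall>i<d. r i = r' i"
      then show "g (\<pi> r) = g (\<pi> r')" by (metis \<pi>_eq)
    qed
    from imageI[OF this, of ?risk] show ?thesis by (simp add: \<pi>_R)
  qed
  then have "?risk ` G_class M R dmax dmax \<subseteq> ?risk ` G_class M R dmax d"
    by blast
  moreover have "?risk ` G_class M R dmax d \<subseteq> ?risk ` G_class M R dmax dmax"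
    using G_class_mono[OF assms(1)] by (rule image_mono)
  ultimately show ?thesis by (simp add: sq_loss_def)
qed

lemma measurable_G_class_oracle_rep:
  fixes X :: "'a \<Rightarrow> 'b::euclidean_space"
  assumes "k \<le> d" "d \<le> dmax" and g: "g \<in> G_class M (oracle_rep X b d dmax) dmax k"
  shows "(\<lambda>\<omega>. g (oracle_rep X b d dmax \<omega>)) \<in> borel_measurable
           (vimage_algebra (space M) (\<lambda>\<omega>. orth_proj (span (b ` {..<k})) (X \<omega>)) borel)"
proof -
  let ?P = "orth_proj (span (b ` {..<k}))"
  define \<psi> where "\<psi> y = (\<lambda>i\<in>{..<dmax}. if i < k then b i \<bullet> y else (0::real))" for y
  have \<psi>_measurable: "\<psi> \<in> borel \<rightarrow>\<^sub>M Rspace dmax"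
    unfolding \<psi>_def by (intro measurable_restrict) simp
  have g_measurable: "g \<in> borel_measurable (Rspace dmax)"
    and g_depends: "\<And>r r'. r \<in> space (Rspace dmax) \<Longrightarrow> r' \<in> space (Rspace dmax) \<Longrightarrow>
                       (\<forall>i<k. r i = r' i) \<Longrightarrow> g r = g r'"
    using g unfolding G_class_def by blast+
  have "g (oracle_rep X b d dmax \<omega>) = g (\<psi> (?P (X \<omega>)))" for \<omega>
  proof (rule g_depends)
    have "b i \<bullet> ?P (X \<omega>) = b i \<bullet> X \<omega>" if "i < k" for i
      using that by (intro inner_orth_proj subspace_span span_base) auto
    then show "\<forall>i<k. oracle_rep X b d dmax \<omega> i = \<psi> (?P (X \<omega>)) i"
      using assms(1,2) by (auto simp: oracle_rep_def \<psi>_def)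
  qed (auto simp: oracle_rep_def \<psi>_def space_PiM)
  moreover have "(\<lambda>\<omega>. g (\<psi> (?P (X \<omega>))))
      \<in> borel_measurable (vimage_algebra (space M) (\<lambda>\<omega>. ?P (X \<omega>)) borel)"
    by (intro measurable_compose[OF measurable_vimage_algebra1]
        measurable_compose[OF \<psi>_measurable g_measurable]) simp
  ultimately show ?thesis by simp
qed

lemma G_class_oracle_rep_factor:
  fixes X :: "'a \<Rightarrow> 'b::euclidean_space"
  assumes "k \<le> d" "d \<le> dmax"
    and h: "h \<in> borel_measurable
              (vimage_algebra (space M) (\<lambda>\<omega>. orth_proj (span (b ` {..<k})) (X \<omega>)) borel)"
    and h2: "integrable M (\<lambda>\<omega>. (h \<omega>)\<^sup>2)"
  obtains g where "g \<in> G_class M (oracle_rep X b d dmax) dmax k"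
    and "\<And>\<omega>. \<omega> \<in> space M \<Longrightarrow> g (oracle_rep X b d dmax \<omega>) = h \<omega>"
proof -
  let ?P = "orth_proj (span (b ` {..<k}))" and ?R = "oracle_rep X b d dmax"
  obtain g\<^sub>0 where g\<^sub>0: "g\<^sub>0 \<in> borel_measurable borel" "\<forall>\<omega>\<in>space M. h \<omega> = g\<^sub>0 (?P (X \<omega>))"
    using vimage_algebra_measurable_factor[OF _ h] by auto
  obtain w where w: "\<And>x. ?P x = (\<Sum>i<k. (b i \<bullet> x) *\<^sub>R w i)"
    using orth_proj_span_image_eq_sum[of "{..<k}" b] by auto
  define g where "g r = g\<^sub>0 (\<Sum>i<k. r i *\<^sub>R w i)" for r :: "nat \<Rightarrow> real"
  have g_R: "g (?R \<omega>) = h \<omega>" if "\<omega> \<in> space M" for \<omega>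
    using assms(1,2) g\<^sub>0(2) that by (simp add: g_def w oracle_rep_def)
  have g_G: "g \<in> G_class M ?R dmax k"
    unfolding G_class_def mem_Collect_eq
  proof (intro conjI ballI impI)
    have "(\<lambda>r. r i) \<in> Rspace dmax \<rightarrow>\<^sub>M borel" if "i < k" for i
      using that assms(1,2) by (intro measurable_component_singleton) auto
    then show "g \<in> borel_measurable (Rspace dmax)"
      unfolding g_def by (intro measurable_compose[OF _ g\<^sub>0(1)] borel_measurable_sum
          borel_measurable_scaleR borel_measurable_const) auto
    show "integrable M (\<lambda>\<omega>. (g (?R \<omega>))\<^sup>2)"
      using h2
      by (rule Bochner_Integration.integrable_cong[THEN iffD1, rotated 2]) (simp_all add: g_R)
    fix r r' :: "nat \<Rightarrow> real" assume "\<forall>i<k. r i = r' i"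
    then show "g r = g r'" by (simp add: g_def)
  qed
  from g_G g_R show ?thesis by (rule that)
qed

lemma (in prob_space) sq_loss_oracle_rep_eq_cond_exp_risk:
  fixes X :: "'a \<Rightarrow> 'b::euclidean_space"
  assumes X: "X \<in> borel_measurable M"
    and Y: "Y \<in> borel_measurable M" "integrable M (\<lambda>\<omega>. (Y \<omega>)\<^sup>2)"
    and "k \<le> d" "d \<le> dmax"
  shows "sq_loss M Y (oracle_rep X b d dmax) dmax k
    = (\<integral>\<omega>. (Y \<omega> - real_cond_exp M
          (vimage_algebra (space M) (\<lambda>\<omega>. orth_proj (span (b ` {..<k})) (X \<omega>)) borel) Y \<omega>)\<^sup>2 \<partial>M)"
proof -
  let ?F = "vimage_algebra (space M) (\<lambda>\<omega>. orth_proj (span (b ` {..<k})) (X \<omega>)) borel"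
  have F: "sigma_finite_subalgebra M ?F"
    using measurable_compose[OF X borel_measurable_orth_proj[OF subspace_span]]
    by (rule sigma_finite_subalgebra_vimage_algebra)
  have Y_int: "integrable M Y"
    using square_integrable_imp_integrable[OF Y] .
  obtain g\<^sub>0 where "g\<^sub>0 \<in> G_class M (oracle_rep X b d dmax) dmax k"
    and "\<And>\<omega>. \<omega> \<in> space M \<Longrightarrow> g\<^sub>0 (oracle_rep X b d dmax \<omega>) = real_cond_exp M ?F Y \<omega>"
    using G_class_oracle_rep_factor[OF assms(4,5) borel_measurable_cond_exp
        sigma_finite_subalgebra.integrable_real_cond_exp_square[OF F Y_int Y(2)]] by blast
  then show ?thesis
    using sq_loss_eq_cond_exp_risk[OF F Y(1) Y_int Y(2)] measurable_G_class_oracle_rep[OF assms(4,5)]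
    by blast
qed

lemma (in prob_space) mean_dr_subspace_of_sq_loss_eq:
  fixes X :: "'a \<Rightarrow> 'b::euclidean_space"
  assumes X: "X \<in> borel_measurable M"
    and Y: "Y \<in> borel_measurable M" "integrable M (\<lambda>\<omega>. (Y \<omega>)\<^sup>2)"
    and mdr: "mean_dr_subspace M X Y (span (b ` {..<d}))"
    and "k \<le> d" "d \<le> dmax"
    and eq: "sq_loss M Y (oracle_rep X b d dmax) dmax k = sq_loss M Y (oracle_rep X b d dmax) dmax d"
  shows "mean_dr_subspace M X Y (span (b ` {..<k}))"
proof -
  let ?P = "\<lambda>j. orth_proj (span (b ` {..<j}))"
  let ?F = "\<lambda>j. vimage_algebra (space M) (\<lambda>\<omega>. ?P j (X \<omega>)) borel"
  have F: "sigma_finite_subalgebra M (?F j)" for j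
    using measurable_compose[OF X borel_measurable_orth_proj[OF subspace_span]]
    by (rule sigma_finite_subalgebra_vimage_algebra)
  have "?P k (?P d x) = ?P k x" for x
    using \<open>k \<le> d\<close> by (intro orth_proj_orth_proj_subspace subspace_span span_mono image_mono) auto
  then have "subalgebra (?F d) (?F k)"
    using subalgebra_vimage_algebra_comp[of "\<lambda>\<omega>. ?P d (X \<omega>)" "space M" borel "?P k" borel]
    by (simp add: borel_measurable_orth_proj)
  moreover have "(\<integral>\<omega>. (Y \<omega> - real_cond_exp M (?F k) Y \<omega>)\<^sup>2 \<partial>M)
      = (\<integral>\<omega>. (Y \<omega> - real_cond_exp M (?F d) Y \<omega>)\<^sup>2 \<partial>M)"
    using eq sq_loss_oracle_rep_eq_cond_exp_risk[OF X Y] \<open>k \<le> d\<close> \<open>d \<le> dmax\<close> by simp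
  ultimately have "AE \<omega> in M. real_cond_exp M (?F k) Y \<omega> = real_cond_exp M (?F d) Y \<omega>"
    using sigma_finite_subalgebra.real_cond_exp_AE_eq_of_risk_eq[OF F F _ Y(1) _ Y(2)]
      square_integrable_imp_integrable[OF Y] by blast
  with mdr show ?thesis
    unfolding mean_dr_subspace_def by (auto simp: subspace_span elim: AE_mp)
qed

theorem propositionB2:
  fixes M :: "'a measure" and X :: "'a \<Rightarrow> 'b::euclidean_space" and Y :: "'a \<Rightarrow> real"
    and b :: "nat \<Rightarrow> 'b" and dmax :: nat
  assumes "prob_space M"
    and "X \<in> borel_measurable M" and "Y \<in> borel_measurable M"
    and "integrable M (\<lambda>\<omega>. (Y \<omega>)\<^sup>2)"
    and "mean_dr_subspace M X Y (central_mean_subspace M X Y)"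
    and "inj_on b {..<dim (central_mean_subspace M X Y)}"
    and "independent (b ` {..<dim (central_mean_subspace M X Y)})"
    and "span (b ` {..<dim (central_mean_subspace M X Y)}) = central_mean_subspace M X Y"
    and "dim (central_mean_subspace M X Y) \<le> dmax"
  shows "d_star_L M Y (oracle_rep X b (dim (central_mean_subspace M X Y)) dmax) dmax
           = dim (central_mean_subspace M X Y)"
proof -
  interpret prob_space M by fact
  define S where "S = central_mean_subspace M X Y"
  define d where "d = dim S"
  let ?L = "sq_loss M Y (oracle_rep X b d dmax) dmax"
  have span_b: "span (b ` {..<d}) = S" and "d \<le> dmax"
    using assms(8,9) by (simp_all add: S_def d_def)
  have L_d: "?L d = ?L dmax"
    using \<open>d \<le> dmax\<close>
    by (intro sq_loss_eq_if_trailing_coordinates_vanish) (auto simp: oracle_rep_def space_PiM)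
  have mdr: "mean_dr_subspace M X Y (span (b ` {..<d}))"
    using assms(5) span_b by (simp add: S_def)
  have "d \<le> k" if "?L k = ?L dmax" for k
  proof (rule ccontr)
    assume "\<not> d \<le> k"
    then have "mean_dr_subspace M X Y (span (b ` {..<k}))"
      using L_d that by (intro mean_dr_subspace_of_sq_loss_eq[OF assms(2-4) mdr _ \<open>d \<le> dmax\<close>]) simp_all
    then have "S \<subseteq> span (b ` {..<k})"
      unfolding S_def central_mean_subspace_def by blast
    then show False
      using \<open>\<not> d \<le> k\<close> dim_le_if_subset_span_image_lessThan by (auto simp: d_def)
  qed
  with L_d \<open>d \<le> dmax\<close> have "d_star_L M Y (oracle_rep X b d dmax) dmax = d"
    unfolding d_star_L_def by (intro Least_equality) auto
  then show ?thesis by (simp add: d_def S_def)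
qed

end
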